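(* Let $N\to\infty$, $p=p(N)$ with $p(1-p)N\to\infty$, and $S=S(N)$, $T=T(N)$ such that $N-S$ and $N+S-T$ are nonnegative integers, $pS/(p(1-p)N)^{1/2}\to\infty$, $pS=o((p(1-p)N)^{2/3})$, and $T=o(N)$. Let $Z_1\sim B(N-S,p)$ and $Z_2\sim B(N+S-T,p)$ be independent. Then for all sufficiently large $N$, $$\mathbb{P}(Z_1=Z_2+pT)<\frac{S}{2\pi(1-p)N}\exp\!\left(-\frac{2pS^2}{(1-p)(2N-T)}+o(1)\right)+\frac{3}{\pi pS}\exp\!\left(-\frac{9pS^2}{8(1-p)N}\right),$$ where $o(1)\to0$ as $N\to\infty$.
   Context: $B(n,p)$ denotes a binomial random variable with parameters $n$ and $p$. *)

theory Defs
  imports "HOL-Probability.Probability" "HOL-Library.Landau_Symbols"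
begin

end

theory Submission
  imports Defs
begin

(*
  Exponential tilting: tilting Z1 by exp(theta x) and Z2 by exp(-theta x) multiplies the
  probability of {Z1 = Z2 + pT} by the two binomial moment generating functions and by
  exp(-theta pT). For the tilted pair the event has probability at most the largest point
  probability of a binomial variable B(n, q), which is at most (2 (n + 1) q (1 - q))^(-1/2).
  A cubic Taylor bound for log(1 - p + p e^t), evaluated at the theta optimising its quadratic
  part, turns the exponent into -2pS^2/((1-p)(2N-T)) plus a remainder of order
  (pS)^3/(p(1-p)N)^2, which vanishes because pS = o((p(1-p)N)^(2/3)). So the first summand
  alone bounds the probability; the positive second summand only makes the bound strict.
*)

section \<open>Point probabilities of binomial distributions\<close>

lemma central_binomial_Suc:
  "((2 * Suc m) choose Suc m) * Suc m = 2 * (2 * m + 1) * ((2 * m) choose m)"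
proof -
  have odd: "((2 * Suc m) choose Suc m) * Suc m = (2 * m + 2) * ((2 * m + 1) choose m)"
    using Suc_times_binomial_eq[of "2 * m + 1" m] by simp
  have even: "((2 * m + 1) choose m) * Suc m = (2 * m + 1) * ((2 * m) choose m)"
    using Suc_times_binomial_eq[of "2 * m" m] binomial_symmetric[of m "Suc (2 * m)"] by simp
  have "((2 * Suc m) choose Suc m) * Suc m * Suc m = (2 * m + 2) * (((2 * m + 1) choose m) * Suc m)"
    unfolding odd by (simp only: mult.assoc)
  also have "\<dots> = 2 * (2 * m + 1) * ((2 * m) choose m) * Suc m"
    unfolding even by (simp add: algebra_simps del: binomial_Suc_Suc)
  finally show ?thesis
    by (metis mult_right_cancel nat.simps(3))
qed

lemma central_binomial_sq_le: "real ((2 * m) choose m) ^ 2 * (2 * m + 1) \<le> 16 ^ m"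
proof (induction m)
  case 0
  then show ?case by simp
next
  case (Suc m)
  define C where "C = real ((2 * m) choose m)"
  define B where "B = real ((2 * Suc m) choose Suc m)"
  have B: "B = 2 * (2 * m + 1) * C / (m + 1)"
    using arg_cong[OF central_binomial_Suc[of m], of real]
    unfolding B_def C_def by (simp add: field_simps del: binomial_Suc_Suc)
  have "B ^ 2 * (2 * Suc m + 1)
      = C ^ 2 * (2 * m + 1) * (4 * (2 * real m + 1) * (2 * real m + 3) / (real m + 1) ^ 2)"
    unfolding B by (simp add: field_simps power2_eq_square)
  also have "\<dots> \<le> 16 ^ m * 16"
  proof (rule mult_mono)
    show "C ^ 2 * (2 * m + 1) \<le> 16 ^ m" using Suc.IH by (simp add: C_def)
    have "4 * (2 * real m + 1) * (2 * real m + 3) \<le> 16 * (real m + 1) ^ 2"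
      by (simp add: power2_eq_square algebra_simps)
    then show "4 * (2 * real m + 1) * (2 * real m + 3) / (real m + 1) ^ 2 \<le> 16"
      by (simp add: pos_divide_le_eq)
  qed simp_all
  finally show ?case by (simp add: B_def del: binomial_Suc_Suc)
qed

lemma binomial_sq_le: "real (M choose j) ^ 2 * (M + 1) \<le> 4 ^ M"
proof (cases "even M")
  case True
  then obtain m where M: "M = 2 * m" by blast
  have "real (M choose j) ^ 2 * (M + 1) \<le> real ((2 * m) choose m) ^ 2 * (2 * m + 1)"
    using binomial_maximum'[of m j] by (simp add: M power_mono)
  also have "\<dots> \<le> 4 ^ M"
    using central_binomial_sq_le[of m] by (simp add: M power_mult)
  finally show ?thesis .
next
  case False
  then obtain m where M: "M = 2 * m + 1" using oddE by blast
  define B where "B = (2 * Suc m) choose Suc m"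
  have half: "real (M choose m) = real B / 2"
    using binomial_symmetric[of m "Suc (2 * m)"] by (simp add: M B_def)
  have "M choose j \<le> M choose m"
    using binomial_maximum[of M j] by (simp add: M)
  then have "real (M choose j) ^ 2 * (M + 1) \<le> (real B / 2) ^ 2 * (2 * Suc m + 1)"
    by (intro mult_mono) (auto simp: M power_mono simp flip: half)
  also have "\<dots> \<le> 4 ^ M"
    using central_binomial_sq_le[of "Suc m"]
    by (simp add: M B_def power_mult power_divide del: binomial_Suc_Suc)
  finally show ?thesis .
qed

lemma pmf_binomial_thinning:
  fixes r s :: real
  assumes r: "r \<in> {0..1}" and s: "s \<in> {0..1}"
  shows "pmf (binomial_pmf n (r * s)) j
    = (\<Sum>M\<le>n. pmf (binomial_pmf n r) M * pmf (binomial_pmf M s) j)"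
proof (cases "j \<le> n")
  case False
  then show ?thesis
    using r s by (simp add: mult_le_one binomial_eq_0)
next
  case True
  define h where "h M = pmf (binomial_pmf n r) M * pmf (binomial_pmf M s) j" for M
  have "(\<Sum>M\<le>n. h M) = (\<Sum>M\<in>{j..n}. h M)"
    using r s by (intro sum.mono_neutral_right) (auto simp: h_def)
  also have "\<dots> = (\<Sum>l\<le>n - j. h (l + j))"
    using sum.shift_bounds_cl_nat_ivl[of h 0 j "n - j"] True by (simp add: atLeast0AtMost)
  also have "\<dots> = (\<Sum>l\<le>n - j. real (n choose j) * (r * s) ^ j
      * (real ((n - j) choose l) * (r * (1 - s)) ^ l * (1 - r) ^ (n - j - l)))"
  proof (rule sum.cong[OF refl])
    fix l assume l: "l \<in> {..n - j}"
    then have "(n choose (l + j)) * ((l + j) choose j) = (n choose j) * ((n - j) choose l)"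
      using choose_mult[of j "l + j" n] True by simp
    moreover have "h (l + j) = real ((n choose (l + j)) * ((l + j) choose j))
        * (r * s) ^ j * (r * (1 - s)) ^ l * (1 - r) ^ (n - j - l)"
      using r s l by (simp add: h_def power_add power_mult_distrib mult_ac add.commute[of l j])
    ultimately show "h (l + j) = real (n choose j) * (r * s) ^ j
      * (real ((n - j) choose l) * (r * (1 - s)) ^ l * (1 - r) ^ (n - j - l))"
      by (simp add: mult_ac)
  qed
  also have "\<dots> = real (n choose j) * (r * s) ^ j * (r * (1 - s) + (1 - r)) ^ (n - j)"
    by (simp only: binomial_ring sum_distrib_left)
  also have "\<dots> = pmf (binomial_pmf n (r * s)) j"
    using r s by (simp add: mult_le_one algebra_simps)
  finally show ?thesis by (simp add: h_def)
qed

lemma sum_pmf_binomial: "r \<in> {0..1} \<Longrightarrow> (\<Sum>M\<le>n. pmf (binomial_pmf n r) M) = 1"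
  by (rule sum_pmf_eq_1) (auto simp: set_pmf_binomial_eq)

lemma sum_pmf_binomial_div_Suc:
  fixes r :: real
  assumes r: "r \<in> {0..1}"
  shows "(\<Sum>M\<le>n. pmf (binomial_pmf n r) M / (real M + 1)) * ((real n + 1) * r) = 1 - (1 - r) ^ Suc n"
proof -
  have "(\<Sum>M\<le>n. pmf (binomial_pmf n r) M / (real M + 1)) * ((real n + 1) * r)
      = (\<Sum>M\<le>n. pmf (binomial_pmf (Suc n) r) (Suc M))"
    unfolding sum_distrib_right
  proof (rule sum.cong[OF refl])
    fix M assume "M \<in> {..n}"
    have "real (Suc n) * real (n choose M) = real (Suc n choose Suc M) * real (Suc M)"
      by (metis Suc_times_binomial_eq of_nat_mult)
    then have c: "real (n choose M) * (n + 1) / (real M + 1) = real (Suc n choose Suc M)"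
      by (simp add: field_simps)
    have "pmf (binomial_pmf n r) M / (real M + 1) * ((real n + 1) * r)
        = real (n choose M) * (n + 1) / (real M + 1) * r ^ Suc M * (1 - r) ^ (Suc n - Suc M)"
      using r by (simp add: field_simps)
    then show "pmf (binomial_pmf n r) M / (real M + 1) * ((real n + 1) * r) = pmf (binomial_pmf (Suc n) r) (Suc M)"
      using r by (simp only: c) (simp del: binomial_Suc_Suc)
  qed
  also have "\<dots> = (\<Sum>i\<le>Suc n. pmf (binomial_pmf (Suc n) r) i) - pmf (binomial_pmf (Suc n) r) 0"
    by (simp only: sum.atMost_Suc_shift)
  also have "\<dots> = 1 - (1 - r) ^ Suc n"
    using r by (simp only: sum_pmf_binomial) simp
  finally show ?thesis .
qed

lemma pmf_binomial_half_sq_le: "pmf (binomial_pmf M (1 / 2)) j ^ 2 * (real M + 1) \<le> 1"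
proof (cases "j \<le> M")
  case True
  then have pmf: "pmf (binomial_pmf M (1 / 2)) j = real (M choose j) / 2 ^ M"
    by (simp add: power_add [symmetric] power_one_over)
  have "(4::real) ^ M = (2 ^ M) ^ 2"
    by (simp add: power_even_eq [symmetric] power_mult)
  then show ?thesis
    using binomial_sq_le[of M j] unfolding pmf by (simp add: power_divide field_simps)
qed (simp add: binomial_eq_0)

(* B(n, q) is B(n, 2q) thinned by fair coins; by Cauchy-Schwarz its point probabilities are
   controlled by the mean over M ~ B(n, 2q) of the fair-coin bound 1/(M + 1). *)
lemma pmf_binomial_sq_le_of_le_half:
  fixes q :: real
  assumes q: "0 \<le> q" "q \<le> 1 / 2"
  shows "pmf (binomial_pmf n q) j ^ 2 * (2 * (real n + 1) * q) \<le> 1"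
proof -
  define r where "r = 2 * q"
  define w where "w M = pmf (binomial_pmf n r) M" for M
  define c where "c M = pmf (binomial_pmf M (1 / 2)) j" for M
  have r: "r \<in> {0..1}" using q by (simp add: r_def)
  have w: "w M \<ge> 0" for M by (simp add: w_def)
  have "pmf (binomial_pmf n q) j = (\<Sum>M\<le>n. sqrt (w M) * (sqrt (w M) * c M))"
    using pmf_binomial_thinning[OF r, of "1 / 2" n j] w
    by (simp add: r_def w_def c_def mult.assoc [symmetric])
  then have "pmf (binomial_pmf n q) j ^ 2
      \<le> (\<Sum>M\<le>n. sqrt (w M) ^ 2) * (\<Sum>M\<le>n. (sqrt (w M) * c M) ^ 2)"
    by (simp only: Cauchy_Schwarz_ineq_sum)
  also have "\<dots> = (\<Sum>M\<le>n. w M * c M ^ 2)"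
    using w sum_pmf_binomial[OF r, of n] by (simp add: w_def power_mult_distrib)
  also have "\<dots> \<le> (\<Sum>M\<le>n. w M / (real M + 1))"
  proof (rule sum_mono)
    fix M
    have "c M ^ 2 \<le> 1 / (real M + 1)"
      using pmf_binomial_half_sq_le[of M j] by (simp add: c_def field_simps)
    then show "w M * c M ^ 2 \<le> w M / (real M + 1)"
      using mult_left_mono[OF _ w] by (simp add: divide_inverse)
  qed
  finally have "pmf (binomial_pmf n q) j ^ 2 * ((real n + 1) * r)
      \<le> (\<Sum>M\<le>n. w M / (real M + 1)) * ((real n + 1) * r)"
    using r by (intro mult_right_mono) auto
  also have "\<dots> \<le> 1"
    using sum_pmf_binomial_div_Suc[OF r, of n] r by (simp add: w_def)
  finally show ?thesis by (simp add: r_def mult_ac)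
qed

lemma pmf_binomial_sq_le:
  fixes q :: real
  assumes q: "q \<in> {0..1}"
  shows "pmf (binomial_pmf n q) j ^ 2 * (2 * (real n + 1) * q * (1 - q)) \<le> 1"
proof (cases "q \<le> 1 / 2")
  case True
  have "2 * (real n + 1) * q * (1 - q) \<le> 2 * (real n + 1) * q"
    using q mult_left_le[of "1 - q" "2 * (real n + 1) * q"] by simp
  then have "pmf (binomial_pmf n q) j ^ 2 * (2 * (real n + 1) * q * (1 - q))
      \<le> pmf (binomial_pmf n q) j ^ 2 * (2 * (real n + 1) * q)"
    by (intro mult_left_mono) auto
  also have "\<dots> \<le> 1"
    using q True by (intro pmf_binomial_sq_le_of_le_half) auto
  finally show ?thesis .
next
  case False
  show ?thesis
  proof (cases "j \<le> n")
    case True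
    have sym: "pmf (binomial_pmf n q) j = pmf (binomial_pmf n (1 - q)) (n - j)"
      using q True binomial_symmetric[OF True] by simp
    have "2 * (real n + 1) * q * (1 - q) \<le> 2 * (real n + 1) * (1 - q)"
      using q mult_left_le[of q "2 * (real n + 1) * (1 - q)"] by (simp add: ac_simps)
    then have "pmf (binomial_pmf n q) j ^ 2 * (2 * (real n + 1) * q * (1 - q))
        \<le> pmf (binomial_pmf n (1 - q)) (n - j) ^ 2 * (2 * (real n + 1) * (1 - q))"
      unfolding sym by (intro mult_left_mono) auto
    also have "\<dots> \<le> 1"
      using q False by (intro pmf_binomial_sq_le_of_le_half) auto
    finally show ?thesis .
  qed (use q in \<open>simp add: binomial_eq_0\<close>)
qed

section \<open>Exponential tilting of a pair of binomial variables\<close>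

definition tilted_prob :: "real \<Rightarrow> real \<Rightarrow> real" where
  "tilted_prob p t = p * exp t / (1 - p + p * exp t)"

lemma bernoulli_mgf_pos:
  fixes p t :: real
  assumes "p \<in> {0..1}"
  shows "0 < 1 - p + p * exp t"
proof (cases "p = 1")
  case False
  with assms have "0 < 1 - p" "0 \<le> p * exp t" by auto
  then show ?thesis by linarith
qed simp

lemma tilted_prob_in_unit: "p \<in> {0..1} \<Longrightarrow> tilted_prob p t \<in> {0..1}"
  using bernoulli_mgf_pos[of p t] by (auto simp: tilted_prob_def divide_le_eq_1)

lemma one_minus_tilted_prob: "p \<in> {0..1} \<Longrightarrow> 1 - tilted_prob p t = (1 - p) / (1 - p + p * exp t)"
  using bernoulli_mgf_pos[of p t] by (simp add: tilted_prob_def field_simps)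

lemma pmf_binomial_tilt:
  assumes p: "p \<in> {0..1}"
  shows "pmf (binomial_pmf n p) j
    = (1 - p + p * exp t) ^ n * exp (- t * j) * pmf (binomial_pmf n (tilted_prob p t)) j"
proof (cases "j \<le> n")
  case True
  define D where "D = 1 - p + p * exp t"
  have D: "D > 0" using bernoulli_mgf_pos[OF p] by (simp add: D_def)
  have pmf: "pmf (binomial_pmf n (tilted_prob p t)) j
      = real (n choose j) * p ^ j * (1 - p) ^ (n - j) * exp t ^ j / (D ^ j * D ^ (n - j))"
    using tilted_prob_in_unit[OF p, of t] one_minus_tilted_prob[OF p, of t]
    by (simp add: tilted_prob_def D_def power_divide power_mult_distrib)
  have Dn: "D ^ n = D ^ j * D ^ (n - j)" using True by (simp flip: power_add)
  have "D ^ n * exp (- t * j) * pmf (binomial_pmf n (tilted_prob p t)) j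
      = real (n choose j) * p ^ j * (1 - p) ^ (n - j) * (exp (- t * j) * exp t ^ j)"
    unfolding pmf Dn using D by (simp add: field_simps)
  also have "exp (- t * j) * exp t ^ j = 1"
    by (simp flip: exp_of_nat_mult exp_add)
  finally show ?thesis
    using p by (simp add: D_def)
qed (use p tilted_prob_in_unit[OF p] in simp)

lemma tilted_prob_variance_ge:
  assumes p: "p \<in> {0..1}" and t: "0 \<le> t"
  shows "p * (1 - p) \<le> exp t * (tilted_prob p t * (1 - tilted_prob p t))"
proof -
  define D where "D = 1 - p + p * exp t"
  have D: "0 < D" "D \<le> exp t"
    using bernoulli_mgf_pos[OF p, of t] p t mult_left_mono[of 1 "exp t" "1 - p"]
    by (auto simp: D_def algebra_simps)
  have "1 \<le> (exp t / D) ^ 2"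
    using D by (intro one_le_power) simp
  then have "p * (1 - p) * 1 \<le> p * (1 - p) * (exp t / D) ^ 2"
    using p by (intro mult_left_mono) auto
  also have "\<dots> = exp t * (tilted_prob p t * (1 - tilted_prob p t))"
    using one_minus_tilted_prob[OF p, of t] D
    by (simp add: tilted_prob_def D_def power2_eq_square field_simps)
  finally show ?thesis by simp
qed

lemma pmf_binomial_tilted_le:
  assumes p: "0 < p" "p < 1" and t: "0 \<le> t"
  shows "pmf (binomial_pmf n (tilted_prob p t)) j \<le> sqrt (exp t / (2 * (real n + 1) * p * (1 - p)))"
proof (rule real_le_rsqrt)
  define q where "q = tilted_prob p t"
  define P where "P = pmf (binomial_pmf n q) j"
  have "2 * (real n + 1) * p * (1 - p) \<le> exp t * (2 * (real n + 1) * q * (1 - q))"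
    using mult_left_mono[OF tilted_prob_variance_ge[of p t], of "2 * (real n + 1)"] p t
    by (simp add: q_def mult_ac)
  then have "P ^ 2 * (2 * (real n + 1) * p * (1 - p)) \<le> P ^ 2 * (exp t * (2 * (real n + 1) * q * (1 - q)))"
    by (rule mult_left_mono) simp
  also have "\<dots> = exp t * (P ^ 2 * (2 * (real n + 1) * q * (1 - q)))"
    by (simp only: mult_ac)
  also have "\<dots> \<le> exp t"
    using pmf_binomial_sq_le[of q n j] tilted_prob_in_unit[of p t] p by (simp add: P_def q_def)
  finally show "pmf (binomial_pmf n q) j ^ 2 \<le> exp t / (2 * (real n + 1) * p * (1 - p))"
    using p by (simp add: P_def pos_le_divide_eq)
qed

lemma exp_le_cubic_taylor: "exp (y::real) \<le> 1 + y + y ^ 2 / 2 + \<bar>y\<bar> ^ 3 * exp \<bar>y\<bar> / 6"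
proof -
  obtain u where u: "\<bar>u\<bar> \<le> \<bar>y\<bar>" and exp_y: "exp y = (\<Sum>m<3. y ^ m / fact m) + exp u / fact 3 * y ^ 3"
    using Maclaurin_exp_le[of y 3] by blast
  have "exp u * y ^ 3 \<le> exp u * \<bar>y\<bar> ^ 3"
    by (intro mult_left_mono) (auto simp flip: power_abs)
  also have "\<dots> \<le> exp \<bar>y\<bar> * \<bar>y\<bar> ^ 3"
    using u by (intro mult_right_mono) auto
  finally show ?thesis
    unfolding exp_y by (simp add: numeral_3_eq_3 power2_eq_square fact_numeral field_simps)
qed

lemma exp_scaled_le_cubic_taylor:
  fixes a y :: real
  assumes a: "a \<in> {0..1}"
  shows "exp (a * y) \<le> 1 + a * y + a ^ 2 * y ^ 2 / 2 + a ^ 3 * (\<bar>y\<bar> ^ 3 * exp \<bar>y\<bar> / 6)"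
proof -
  have "exp \<bar>a * y\<bar> \<le> exp \<bar>y\<bar>"
    using a by (simp add: abs_mult mult_left_le_one_le)
  then have "\<bar>a * y\<bar> ^ 3 * exp \<bar>a * y\<bar> \<le> \<bar>a * y\<bar> ^ 3 * exp \<bar>y\<bar>"
    by (intro mult_left_mono) auto
  then show ?thesis
    using exp_le_cubic_taylor[of "a * y"] a by (simp add: abs_mult power_mult_distrib)
qed

definition bernoulli_cgf_bound :: "real \<Rightarrow> real \<Rightarrow> real" where
  "bernoulli_cgf_bound p t = p * t + p * (1 - p) * (t ^ 2 / 2 + \<bar>t\<bar> ^ 3 * exp \<bar>t\<bar> / 6)"

lemma bernoulli_mgf_le:
  fixes p t :: real
  assumes p: "p \<in> {0..1}"
  shows "1 - p + p * exp t \<le> exp (bernoulli_cgf_bound p t)"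
proof -
  (* Centre: 1 - p + p e^t = e^(pt) ((1 - p) e^(-pt) + p e^((1-p)t)); expand both exponentials. *)
  define c where "c = \<bar>t\<bar> ^ 3 * exp \<bar>t\<bar> / 6"
  have c: "0 \<le> c" by (simp add: c_def)
  have "(1 - p) * exp (p * - t) + p * exp ((1 - p) * t)
      \<le> (1 - p) * (1 - p * t + p ^ 2 * t ^ 2 / 2 + p ^ 3 * c)
        + p * (1 + (1 - p) * t + (1 - p) ^ 2 * t ^ 2 / 2 + (1 - p) ^ 3 * c)"
    using p exp_scaled_le_cubic_taylor[of p "- t"] exp_scaled_le_cubic_taylor[of "1 - p" t]
    by (intro add_mono mult_left_mono) (auto simp: c_def)
  also have "\<dots> = 1 + p * (1 - p) * (t ^ 2 / 2 + c) - 2 * (p * (1 - p)) ^ 2 * c"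
    by (simp add: field_simps power2_eq_square power3_eq_cube)
  also have "\<dots> \<le> 1 + p * (1 - p) * (t ^ 2 / 2 + c)"
    using c by simp
  also have "\<dots> \<le> exp (p * (1 - p) * (t ^ 2 / 2 + c))"
    by (rule exp_ge_add_one_self)
  finally have "exp (p * t) * ((1 - p) * exp (p * - t) + p * exp ((1 - p) * t))
      \<le> exp (p * t) * exp (p * (1 - p) * (t ^ 2 / 2 + c))"
    by (rule mult_left_mono) simp
  then show ?thesis
    by (simp add: bernoulli_cgf_bound_def c_def algebra_simps flip: exp_add)
qed

lemma prob_pair_binomial_eq_sum:
  assumes "p1 \<in> {0..1}" "p2 \<in> {0..1}"
  shows "measure_pmf.prob (pair_pmf (binomial_pmf n1 p1) (binomial_pmf n2 p2)) A
    = (\<Sum>(a, b) \<in> A \<inter> {..n1} \<times> {..n2}. pmf (binomial_pmf n1 p1) a * pmf (binomial_pmf n2 p2) b)"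
proof -
  define P where "P = pair_pmf (binomial_pmf n1 p1) (binomial_pmf n2 p2)"
  have "set_pmf P \<subseteq> {..n1} \<times> {..n2}"
    using assms by (auto simp: P_def set_pmf_binomial_eq split: if_splits)
  then have "A \<inter> set_pmf P = (A \<inter> {..n1} \<times> {..n2}) \<inter> set_pmf P" by blast
  then have "measure_pmf.prob P A = measure_pmf.prob P (A \<inter> {..n1} \<times> {..n2})"
    by (metis measure_Int_set_pmf)
  also have "\<dots> = (\<Sum>x \<in> A \<inter> {..n1} \<times> {..n2}. pmf P x)"
    by (rule measure_measure_pmf_finite) simp
  also have "\<dots> = (\<Sum>(a, b) \<in> A \<inter> {..n1} \<times> {..n2}. pmf (binomial_pmf n1 p1) a * pmf (binomial_pmf n2 p2) b)"
    by (intro sum.cong refl) (auto simp: P_def pmf_pair)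
  finally show ?thesis
    by (simp add: P_def)
qed

lemma prob_pair_pmf_le_of_unique_fst:
  assumes fin: "finite (set_pmf M)" "finite (set_pmf N)"
    and le: "\<And>a. pmf M a \<le> c"
    and unique: "\<And>a a' b. (a, b) \<in> A \<Longrightarrow> (a', b) \<in> A \<Longrightarrow> a = a'"
  shows "measure_pmf.prob (pair_pmf M N) A \<le> c"
proof -
  define B where "B = A \<inter> set_pmf M \<times> set_pmf N"
  have c: "0 \<le> c" using pmf_nonneg[of M undefined] le[of undefined] by linarith
  have "measure_pmf.prob (pair_pmf M N) A = measure_pmf.prob (pair_pmf M N) B"
    using measure_Int_set_pmf[of "pair_pmf M N" A] by (simp add: B_def)
  also have "\<dots> = (\<Sum>x\<in>B. pmf M (fst x) * pmf N (snd x))"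
    using fin by (subst measure_measure_pmf_finite) (auto simp: B_def pmf_pair intro!: sum.cong)
  also have "\<dots> \<le> (\<Sum>x\<in>B. c * pmf N (snd x))"
    using le by (intro sum_mono mult_right_mono) auto
  also have "\<dots> = c * (\<Sum>b \<in> snd ` B. pmf N b)"
  proof -
    have "inj_on snd B" using unique by (force simp: B_def inj_on_def)
    then show ?thesis by (simp add: sum.reindex sum_distrib_left)
  qed
  also have "\<dots> \<le> c * (\<Sum>b \<in> set_pmf N. pmf N b)"
    using fin c by (intro mult_left_mono sum_mono2) (auto simp: B_def)
  also have "\<dots> = c"
    using fin by (simp add: sum_pmf_eq_1)
  finally show ?thesis .
qed

lemma prob_binomial_diff_tilt:
  fixes k t :: real
  assumes p: "p \<in> {0..1}"
  shows "measure_pmf.prob (pair_pmf (binomial_pmf n1 p) (binomial_pmf n2 p)) {(a, b). real a = real b + k}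
    = (1 - p + p * exp t) ^ n1 * (1 - p + p * exp (- t)) ^ n2 * exp (- t * k)
      * measure_pmf.prob (pair_pmf (binomial_pmf n1 (tilted_prob p t)) (binomial_pmf n2 (tilted_prob p (- t))))
          {(a, b). real a = real b + k}"
proof -
  define K where "K = (1 - p + p * exp t) ^ n1 * (1 - p + p * exp (- t)) ^ n2 * exp (- t * k)"
  have pointwise: "pmf (binomial_pmf n1 p) a * pmf (binomial_pmf n2 p) b
      = K * (pmf (binomial_pmf n1 (tilted_prob p t)) a * pmf (binomial_pmf n2 (tilted_prob p (- t))) b)"
    if "real a = real b + k" for a b
  proof -
    have "exp (- t * a) * exp (- (- t) * b) = exp (- t * k)"
      using that by (simp add: algebra_simps flip: exp_add)
    then show ?thesis
      unfolding pmf_binomial_tilt[OF p, of n1 a t] pmf_binomial_tilt[OF p, of n2 b "- t"]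
      by (simp add: K_def mult_ac)
  qed
  have "measure_pmf.prob (pair_pmf (binomial_pmf n1 p) (binomial_pmf n2 p)) {(a, b). real a = real b + k}
      = (\<Sum>(a, b) \<in> {(a, b). real a = real b + k} \<inter> {..n1} \<times> {..n2}.
          K * (pmf (binomial_pmf n1 (tilted_prob p t)) a * pmf (binomial_pmf n2 (tilted_prob p (- t))) b))"
    unfolding prob_pair_binomial_eq_sum[OF p p] by (intro sum.cong refl) (auto intro: pointwise)
  then show ?thesis
    using tilted_prob_in_unit[OF p] by (simp add: K_def prob_pair_binomial_eq_sum sum_distrib_left case_prod_beta)
qed

lemma prob_binomial_diff_le:
  fixes k t :: real
  assumes p: "0 < p" "p < 1" and t: "0 \<le> t"
  shows "measure_pmf.prob (pair_pmf (binomial_pmf n1 p) (binomial_pmf n2 p)) {(a, b). real a = real b + k}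
    \<le> exp (n1 * bernoulli_cgf_bound p t + n2 * bernoulli_cgf_bound p (- t) - t * k)
      * sqrt (exp t / (2 * (real n1 + 1) * p * (1 - p)))"
proof -
  have p01: "p \<in> {0..1}" using p by simp
  have "measure_pmf.prob (pair_pmf (binomial_pmf n1 (tilted_prob p t)) (binomial_pmf n2 (tilted_prob p (- t))))
      {(a, b). real a = real b + k} \<le> sqrt (exp t / (2 * (real n1 + 1) * p * (1 - p)))"
    using p t tilted_prob_in_unit[OF p01]
    by (intro prob_pair_pmf_le_of_unique_fst pmf_binomial_tilted_le) auto
  moreover have "(1 - p + p * exp t) ^ n1 * (1 - p + p * exp (- t)) ^ n2 * exp (- t * k)
      \<le> exp (n1 * bernoulli_cgf_bound p t + n2 * bernoulli_cgf_bound p (- t) - t * k)"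
  proof -
    have "(1 - p + p * exp t) ^ n1 * (1 - p + p * exp (- t)) ^ n2
        \<le> exp (bernoulli_cgf_bound p t) ^ n1 * exp (bernoulli_cgf_bound p (- t)) ^ n2"
      using p01 bernoulli_mgf_pos[OF p01] bernoulli_mgf_le[OF p01]
      by (intro mult_mono power_mono) (auto intro: less_imp_le)
    then have "(1 - p + p * exp t) ^ n1 * (1 - p + p * exp (- t)) ^ n2 * exp (- t * k)
        \<le> exp (bernoulli_cgf_bound p t) ^ n1 * exp (bernoulli_cgf_bound p (- t)) ^ n2 * exp (- t * k)"
      by (rule mult_right_mono) simp
    then show ?thesis
      by (simp add: algebra_simps flip: exp_of_nat_mult exp_add)
  qed
  ultimately show ?thesis
    unfolding prob_binomial_diff_tilt[OF p01, of n1 n2 k t]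
    using bernoulli_mgf_pos[OF p01] by (intro mult_mono) auto
qed

section \<open>The moderate deviation regime\<close>

(* The minimiser of the quadratic part -2 p S theta + p (1 - p) (2n - T) theta^2 / 2 of the
   exponent in prob_binomial_diff_le at n1 = n - S, n2 = n + S - T, k = p T. *)
definition shift_tilt :: "real \<Rightarrow> real \<Rightarrow> real \<Rightarrow> real \<Rightarrow> real" where
  "shift_tilt p S T n = 2 * S / ((1 - p) * (2 * n - T))"

definition shift_tilt_error :: "real \<Rightarrow> real \<Rightarrow> real \<Rightarrow> real \<Rightarrow> real" where
  "shift_tilt_error p S T n
    = p * (1 - p) * (2 * n - T) * shift_tilt p S T n ^ 3 * exp (shift_tilt p S T n) / 6"

lemma shift_tilt_nonneg: "p < 1 \<Longrightarrow> T < 2 * n \<Longrightarrow> 0 \<le> S \<Longrightarrow> 0 \<le> shift_tilt p S T n"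
  by (simp add: shift_tilt_def)

lemma shift_tilt_exponent:
  fixes p S T n :: real
  assumes p: "p < 1" and T: "T < 2 * n" and S: "0 \<le> S"
  defines "\<theta> \<equiv> shift_tilt p S T n"
  shows "(n - S) * bernoulli_cgf_bound p \<theta> + (n + S - T) * bernoulli_cgf_bound p (- \<theta>) - \<theta> * (p * T)
    = - (2 * p * S ^ 2) / ((1 - p) * (2 * n - T)) + shift_tilt_error p S T n"
proof -
  define Q where "Q = p * (1 - p) * (\<theta> ^ 2 / 2 + \<theta> ^ 3 * exp \<theta> / 6)"
  have "0 \<le> \<theta>" unfolding \<theta>_def using p T S by (rule shift_tilt_nonneg)
  then have cgf: "bernoulli_cgf_bound p \<theta> = p * \<theta> + Q" "bernoulli_cgf_bound p (- \<theta>) = - p * \<theta> + Q"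
    by (simp_all add: bernoulli_cgf_bound_def Q_def)
  have "(n - S) * bernoulli_cgf_bound p \<theta> + (n + S - T) * bernoulli_cgf_bound p (- \<theta>) - \<theta> * (p * T)
      = - 2 * (p * S * \<theta>) + (2 * n - T) * Q"
    unfolding cgf by (simp add: algebra_simps)
  also have "(2 * n - T) * Q = p * \<theta> / 2 * ((1 - p) * (2 * n - T) * \<theta>) + shift_tilt_error p S T n"
    by (simp add: Q_def shift_tilt_error_def \<theta>_def [symmetric] power2_eq_square field_simps)
  also have "(1 - p) * (2 * n - T) * \<theta> = 2 * S"
    using p T by (simp add: \<theta>_def shift_tilt_def)
  also have "- 2 * (p * S * \<theta>) + (p * \<theta> / 2 * (2 * S) + shift_tilt_error p S T n)
      = - (p * S * \<theta>) + shift_tilt_error p S T n"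
    by simp
  also have "p * S * \<theta> = 2 * p * S ^ 2 / ((1 - p) * (2 * n - T))"
    by (simp add: \<theta>_def shift_tilt_def power2_eq_square)
  finally show ?thesis
    by simp
qed

lemma powr_two_thirds_cube:
  fixes x :: real
  assumes "0 \<le> x"
  shows "(x powr (2 / 3)) ^ 3 = x ^ 2"
proof -
  have "(x powr (2 / 3)) ^ 3 = (x powr (2 / 3)) powr 3" by simp
  also have "\<dots> = x powr 2" by (simp add: powr_powr)
  also have "\<dots> = x ^ 2" using assms by simp
  finally show ?thesis .
qed

(* A single large N of the theorem, with n for N; the asymptotic hypotheses give these
   conditions eventually (the constants 20 and 1/4 are arbitrary). *)
locale moderate_shift =
  fixes p S T n :: real
  assumes p_nonneg: "0 \<le> p" and p_le_1: "p \<le> 1"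
    and variance_ge_1: "1 \<le> p * (1 - p) * n"
    and shift_large: "20 \<le> p * S / sqrt (p * (1 - p) * n)"
    and shift_small: "p * S / (p * (1 - p) * n) powr (2 / 3) \<le> 1 / 4"
    and T_le: "\<bar>T\<bar> \<le> n / 2"
begin

abbreviation variance :: real where "variance \<equiv> p * (1 - p) * n"

abbreviation shift_ratio :: real where "shift_ratio \<equiv> p * S / variance powr (2 / 3)"

abbreviation pair_variance :: real where "pair_variance \<equiv> p * (1 - p) * (2 * n - T)"

abbreviation tilt :: real where "tilt \<equiv> shift_tilt p S T n"

lemma p_pos: "0 < p" and p_lt_1: "p < 1"
proof -
  have "p \<noteq> 0" "p \<noteq> 1" using variance_ge_1 by auto
  then show "0 < p" "p < 1" using p_nonneg p_le_1 by auto
qed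

lemma variance_pos: "0 < variance"
  using variance_ge_1 by simp

lemma n_pos: "0 < n"
proof -
  have "0 < p * (1 - p)" using p_pos p_lt_1 by simp
  with variance_pos show ?thesis by (rule zero_less_mult_pos)
qed

lemma pS_ge_sqrt_variance: "20 * sqrt variance \<le> p * S"
  using shift_large variance_pos by (simp add: pos_le_divide_eq)

lemma S_pos: "0 < S"
proof -
  have "0 < p * S" using pS_ge_sqrt_variance variance_pos by (smt (verit) real_sqrt_gt_zero)
  then show ?thesis using p_pos by (simp add: zero_less_mult_iff)
qed

lemma pS_le_variance: "p * S \<le> variance / 4"
proof -
  have "0 < variance powr (2 / 3)" using p_pos p_lt_1 n_pos by simp
  then have "p * S \<le> 1 / 4 * variance powr (2 / 3)"
    using shift_small by (simp only: pos_divide_le_eq)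
  also have "variance powr (2 / 3) \<le> variance powr 1"
    using variance_ge_1 by (intro powr_mono) auto
  also have "\<dots> = variance"
    using variance_pos by (intro powr_one) simp
  finally show ?thesis by simp
qed

lemma S_le_quarter_n: "S \<le> n / 4"
proof -
  have "S \<le> (1 - p) * n / 4"
    using pS_le_variance p_pos by (simp add: mult.assoc)
  also have "\<dots> \<le> n / 4"
    using p_pos n_pos by simp
  finally show ?thesis .
qed
lemma variance_le_pair_variance: "variance \<le> pair_variance"
proof -
  have "n \<le> 2 * n - T" using T_le n_pos by simp
  then show ?thesis using p_pos p_lt_1 by (intro mult_left_mono) auto
qed

lemma pair_variance_pos: "0 < pair_variance"
  using variance_pos variance_le_pair_variance by linarith

lemma T_lt: "T < 2 * n"
  using T_le n_pos by simp

lemma tilt_eq: "tilt = 2 * (p * S) / pair_variance"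
  using p_pos by (simp add: shift_tilt_def)

lemma tilt_nonneg: "0 \<le> tilt"
  using p_lt_1 T_lt S_pos by (intro shift_tilt_nonneg) auto

lemma tilt_le_half: "tilt \<le> 1 / 2"
proof -
  have "tilt \<le> 2 * (p * S) / variance"
    unfolding tilt_eq using S_pos p_pos variance_pos variance_le_pair_variance pair_variance_pos
    by (intro divide_left_mono) auto
  also have "\<dots> \<le> 1 / 2"
    using pS_le_variance variance_pos by (simp only: pos_divide_le_eq)
  finally show ?thesis .
qed

lemma shift_tilt_error_nonneg: "0 \<le> shift_tilt_error p S T n"
  unfolding shift_tilt_error_def using tilt_nonneg p_nonneg p_le_1 T_lt
  by (intro divide_nonneg_pos mult_nonneg_nonneg) auto

lemma shift_tilt_error_le: "shift_tilt_error p S T n \<le> 4 * exp 1 / 3 * shift_ratio ^ 3"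
proof -
  have "pair_variance * tilt ^ 3 = 8 * (p * S) ^ 3 / pair_variance ^ 2"
    unfolding tilt_eq using pair_variance_pos by (simp add: power_divide power2_eq_square power3_eq_cube)
  also have "\<dots> \<le> 8 * (p * S) ^ 3 / variance ^ 2"
  proof (rule divide_left_mono)
    show "variance ^ 2 \<le> pair_variance ^ 2"
      using variance_le_pair_variance variance_pos by (intro power_mono) auto
    show "0 \<le> 8 * (p * S) ^ 3" using S_pos p_pos by simp
    show "0 < pair_variance ^ 2 * variance ^ 2"
      using mult_pos_pos[OF zero_less_power[OF pair_variance_pos] zero_less_power[OF variance_pos]] .
  qed
  also have "\<dots> = 8 * shift_ratio ^ 3"
    using variance_pos by (simp add: powr_two_thirds_cube power_divide)
  finally have "pair_variance * tilt ^ 3 \<le> 8 * shift_ratio ^ 3" .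
  moreover have "exp tilt \<le> exp 1"
    using tilt_le_half by simp
  ultimately have "pair_variance * tilt ^ 3 * exp tilt \<le> 8 * shift_ratio ^ 3 * exp 1"
    by (rule mult_mono) (use S_pos p_pos in auto)
  then have "pair_variance * tilt ^ 3 * exp tilt / 6 \<le> 8 * shift_ratio ^ 3 * exp 1 / 6"
    by (rule divide_right_mono) simp
  also have "\<dots> = 4 * exp 1 / 3 * shift_ratio ^ 3"
    by simp
  finally show ?thesis
    unfolding shift_tilt_error_def .
qed

lemma pS2_ge: "400 * ((1 - p) * n) \<le> p * S ^ 2"
proof -
  have "(20 * sqrt variance) ^ 2 \<le> (p * S) ^ 2"
    using pS_ge_sqrt_variance variance_pos by (intro power_mono) auto
  then have "p * (400 * ((1 - p) * n)) \<le> p * (p * S ^ 2)"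
    using variance_pos by (simp add: power_mult_distrib power2_eq_square mult_ac)
  then show ?thesis using p_pos by simp
qed

lemma exp_tilt_mult_sq_le:
  "exp tilt * (2 * pi * (1 - p) * n) ^ 2 \<le> S ^ 2 * (2 * (n - S + 1) * p * (1 - p))"
proof -
  have "exp tilt * (2 * pi * (1 - p) * n) ^ 2 = (exp tilt * pi ^ 2) * (4 * ((1 - p) * n) ^ 2)"
    by (simp add: power_mult_distrib)
  also have "\<dots> \<le> (3 * 16) * (4 * ((1 - p) * n) ^ 2)"
  proof (intro mult_right_mono mult_mono)
    show "exp tilt \<le> 3"
      using tilt_le_half exp_le order.trans[of "exp tilt" "exp 1" 3] by simp
    show "pi ^ 2 \<le> 16"
      using power_mono[of pi 4 2] pi_less_4 pi_gt_zero by simp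
  qed auto
  also have "\<dots> \<le> 400 * ((1 - p) * n) * ((1 - p) * n)"
    using p_lt_1 n_pos by (simp add: power2_eq_square)
  also have "\<dots> \<le> p * S ^ 2 * ((1 - p) * (2 * (n - S + 1)))"
  proof (rule mult_mono)
    show "(1 - p) * n \<le> (1 - p) * (2 * (n - S + 1))"
      using S_le_quarter_n p_lt_1 n_pos by (intro mult_left_mono) auto
  qed (use pS2_ge p_pos p_lt_1 n_pos in auto)
  also have "\<dots> = S ^ 2 * (2 * (n - S + 1) * p * (1 - p))"
    by (simp only: ac_simps)
  finally show ?thesis .
qed

lemma sqrt_tilt_le:
  "sqrt (exp tilt / (2 * (n - S + 1) * p * (1 - p))) \<le> S / (2 * pi * (1 - p) * n)"
proof (rule real_le_lsqrt)
  define B where "B = 2 * (n - S + 1) * p * (1 - p)"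
  define D where "D = 2 * pi * (1 - p) * n"
  have pos: "0 < B" "0 < D"
    using S_le_quarter_n n_pos p_pos p_lt_1 by (simp_all add: B_def D_def)
  have "exp tilt / B = exp tilt * D ^ 2 / (B * D ^ 2)"
    using pos by simp
  also have "\<dots> \<le> S ^ 2 * B / (B * D ^ 2)"
    using exp_tilt_mult_sq_le pos by (intro divide_right_mono) (simp_all add: B_def D_def mult.commute)
  also have "\<dots> = (S / D) ^ 2"
    using pos by (simp add: power_divide)
  finally show "exp tilt / (2 * (n - S + 1) * p * (1 - p)) \<le> (S / (2 * pi * (1 - p) * n)) ^ 2"
    by (simp only: B_def D_def)
  show "0 \<le> S / (2 * pi * (1 - p) * n)"
    using S_pos p_lt_1 n_pos by simp
qed

lemma prob_shifted_binomials_le: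
  assumes "n - S \<in> \<nat>" "n + S - T \<in> \<nat>"
  shows "measure_pmf.prob (pair_pmf (binomial_pmf (nat \<lfloor>n - S\<rfloor>) p) (binomial_pmf (nat \<lfloor>n + S - T\<rfloor>) p))
      {(z1, z2). real z1 = real z2 + p * T}
    \<le> S / (2 * pi * (1 - p) * n) * exp (- (2 * p * S\<^sup>2) / ((1 - p) * (2 * n - T)) + shift_tilt_error p S T n)"
proof -
  obtain m1 m2 where m1: "n - S = real m1" and m2: "n + S - T = real m2"
    using assms by (auto elim!: Nats_cases)
  have "measure_pmf.prob (pair_pmf (binomial_pmf m1 p) (binomial_pmf m2 p)) {(z1, z2). real z1 = real z2 + p * T}
      \<le> exp (m1 * bernoulli_cgf_bound p tilt + m2 * bernoulli_cgf_bound p (- tilt) - tilt * (p * T))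
        * sqrt (exp tilt / (2 * (real m1 + 1) * p * (1 - p)))"
    using p_pos p_lt_1 tilt_nonneg by (rule prob_binomial_diff_le)
  also have "m1 * bernoulli_cgf_bound p tilt + m2 * bernoulli_cgf_bound p (- tilt) - tilt * (p * T)
      = - (2 * p * S\<^sup>2) / ((1 - p) * (2 * n - T)) + shift_tilt_error p S T n"
    unfolding m1 [symmetric] m2 [symmetric] using p_lt_1 T_lt S_pos by (intro shift_tilt_exponent) auto
  also have "sqrt (exp tilt / (2 * (real m1 + 1) * p * (1 - p))) \<le> S / (2 * pi * (1 - p) * n)"
    using sqrt_tilt_le by (simp add: m1 [symmetric])
  finally show ?thesis
    using m1 m2 by (simp add: mult.commute)
qed

end

lemma eventually_moderate_shift:
  fixes p S T :: "nat \<Rightarrow> real"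
  assumes "\<forall>N. 0 \<le> p N \<and> p N \<le> 1"
    and "filterlim (\<lambda>N. p N * (1 - p N) * real N) at_top sequentially"
    and "filterlim (\<lambda>N. p N * S N / sqrt (p N * (1 - p N) * real N)) at_top sequentially"
    and "(\<lambda>N. p N * S N / (p N * (1 - p N) * real N) powr (2 / 3)) \<longlonglongrightarrow> 0"
    and "(\<lambda>N. T N / real N) \<longlonglongrightarrow> 0"
  shows "\<forall>\<^sub>F N in sequentially. moderate_shift (p N) (S N) (T N) (real N)"
proof -
  have "\<forall>\<^sub>F N in sequentially. 1 \<le> p N * (1 - p N) * real N"
    "\<forall>\<^sub>F N in sequentially. 20 \<le> p N * S N / sqrt (p N * (1 - p N) * real N)"
    using assms(2,3) unfolding filterlim_at_top by blast+
  moreover have "\<forall>\<^sub>F N in sequentially. p N * S N / (p N * (1 - p N) * real N) powr (2 / 3) < 1 / 4"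
    "\<forall>\<^sub>F N in sequentially. \<bar>T N / real N\<bar> < 1 / 2"
    using order_tendstoD(2)[OF assms(4), of "1 / 4"] order_tendstoD(2)[OF tendsto_rabs_zero[OF assms(5)], of "1 / 2"]
    by simp_all
  ultimately show ?thesis
  proof eventually_elim
    case (elim N)
    then have "0 < real N" by (cases N) auto
    with elim show ?case
      using assms(1) by unfold_locales (auto simp: pos_divide_less_eq)
  qed
qed

lemma shift_tilt_error_tendsto_zero:
  fixes p S T :: "nat \<Rightarrow> real"
  assumes regime: "\<forall>\<^sub>F N in sequentially. moderate_shift (p N) (S N) (T N) (real N)"
    and ratio: "(\<lambda>N. p N * S N / (p N * (1 - p N) * real N) powr (2 / 3)) \<longlonglongrightarrow> 0"
  shows "(\<lambda>N. shift_tilt_error (p N) (S N) (T N) (real N)) \<longlonglongrightarrow> 0"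
proof (rule tendsto_sandwich)
  show "\<forall>\<^sub>F N in sequentially. 0 \<le> shift_tilt_error (p N) (S N) (T N) (real N)"
    using regime by eventually_elim (rule moderate_shift.shift_tilt_error_nonneg)
  show "\<forall>\<^sub>F N in sequentially. shift_tilt_error (p N) (S N) (T N) (real N)
      \<le> 4 * exp 1 / 3 * (p N * S N / (p N * (1 - p N) * real N) powr (2 / 3)) ^ 3"
    using regime by eventually_elim (rule moderate_shift.shift_tilt_error_le)
  have "(\<lambda>N. 4 * exp 1 / 3 * (p N * S N / (p N * (1 - p N) * real N) powr (2 / 3)) ^ 3)
      \<longlonglongrightarrow> 4 * exp 1 / 3 * 0 ^ 3"
    by (intro tendsto_intros ratio)
  then show "(\<lambda>N. 4 * exp 1 / 3 * (p N * S N / (p N * (1 - p N) * real N) powr (2 / 3)) ^ 3)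
      \<longlonglongrightarrow> 0"
    by simp
qed simp

theorem mainTheorem13:
  fixes p S T :: "nat \<Rightarrow> real"
  assumes p_prob: "\<forall>N. 0 \<le> p N \<and> p N \<le> 1"
    and var_inf: "filterlim (\<lambda>N. p N * (1 - p N) * real N) at_top sequentially"
    and int1: "\<forall>N. real N - S N \<in> \<nat>"
    and int2: "\<forall>N. real N + S N - T N \<in> \<nat>"
    and S_big: "filterlim (\<lambda>N. p N * S N / sqrt (p N * (1 - p N) * real N)) at_top sequentially"
    and S_small: "(\<lambda>N. p N * S N) \<in> o(\<lambda>N. (p N * (1 - p N) * real N) powr (2/3))"
    and T_small: "T \<in> o(\<lambda>N. real N)"
  shows "\<exists>\<epsilon> :: nat \<Rightarrow> real. \<epsilon> \<longlonglongrightarrow> 0 \<and>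
    (\<forall>\<^sub>F N in sequentially.
      measure_pmf.prob
        (pair_pmf (binomial_pmf (nat \<lfloor>real N - S N\<rfloor>) (p N))
                  (binomial_pmf (nat \<lfloor>real N + S N - T N\<rfloor>) (p N)))
        {(z1, z2). real z1 = real z2 + p N * T N}
      < S N / (2 * pi * (1 - p N) * real N)
          * exp (- (2 * p N * (S N)\<^sup>2) / ((1 - p N) * (2 * real N - T N)) + \<epsilon> N)
        + 3 / (pi * p N * S N) * exp (- (9 * p N * (S N)\<^sup>2) / (8 * (1 - p N) * real N)))"
proof -
  have ratio: "(\<lambda>N. p N * S N / (p N * (1 - p N) * real N) powr (2 / 3)) \<longlonglongrightarrow> 0"
    using smalloD_tendsto[OF S_small] .
  have regime: "\<forall>\<^sub>F N in sequentially. moderate_shift (p N) (S N) (T N) (real N)"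
    using p_prob var_inf S_big ratio smalloD_tendsto[OF T_small] by (rule eventually_moderate_shift)
  have "(\<lambda>N. shift_tilt_error (p N) (S N) (T N) (real N)) \<longlonglongrightarrow> 0"
    using regime ratio by (rule shift_tilt_error_tendsto_zero)
  moreover from regime have "\<forall>\<^sub>F N in sequentially.
      measure_pmf.prob
        (pair_pmf (binomial_pmf (nat \<lfloor>real N - S N\<rfloor>) (p N))
                  (binomial_pmf (nat \<lfloor>real N + S N - T N\<rfloor>) (p N)))
        {(z1, z2). real z1 = real z2 + p N * T N}
      < S N / (2 * pi * (1 - p N) * real N)
          * exp (- (2 * p N * (S N)\<^sup>2) / ((1 - p N) * (2 * real N - T N))
                 + shift_tilt_error (p N) (S N) (T N) (real N))
        + 3 / (pi * p N * S N) * exp (- (9 * p N * (S N)\<^sup>2) / (8 * (1 - p N) * real N))"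
  proof eventually_elim
    case (elim N)
    interpret moderate_shift "p N" "S N" "T N" "real N" by (fact elim)
    have "0 < 3 / (pi * p N * S N) * exp (- (9 * p N * (S N)\<^sup>2) / (8 * (1 - p N) * real N))"
      using p_pos S_pos by simp
    with prob_shifted_binomials_le[OF int1[rule_format] int2[rule_format]] show ?case
      by linarith
  qed
  ultimately show ?thesis by blast
qed

end
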